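(* Let $p\ge 7$ be a prime and $k$ an integer with $(p+1)/2\le k\le p-3$. Then $\mathsf{BO}(k,\mathbb{Z}/p\mathbb{Z})=k+1$.
   Context: For a positive integer $k$, a set $\{g_1,\dots,g_k\}$ of $k$ distinct elements of a finite abelian group $G$ (written additively) is called $k$-barycentric if $\sum_{i=1}^k g_i = k\,g_j$ for some $1\le j\le k$. The $k$-th barycentric Olson constant $\mathsf{BO}(k,G)$ is the smallest integer $\ell$ such that every subset $A\subseteq G$ with $|A|\ge \ell$ contains a $k$-barycentric subset (so that always $\mathsf{BO}(k,G)\le |G|+1$). *)

theory Defs
  imports "HOL-Algebra.Algebra" "HOL-Number_Theory.Residues"
begin

text \<open>A finite abelian group G is given as a HOL-Algebra structure (group operation
  written as mult). For Z/pZ we use the additive group of residue_ring p.\<close>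

definition k_barycentric :: "('a, 'b) monoid_scheme \<Rightarrow> nat \<Rightarrow> 'a set \<Rightarrow> bool" where
  "k_barycentric G k S \<longleftrightarrow>
     S \<subseteq> carrier G \<and> finite S \<and> card S = k \<and>
     (\<exists>g\<in>S. finprod G (\<lambda>x. x) S = g [^]\<^bsub>G\<^esub> k)"

definition barycentric_olson :: "nat \<Rightarrow> ('a, 'b) monoid_scheme \<Rightarrow> nat" where
  "barycentric_olson k G =
     (LEAST l. \<forall>A. A \<subseteq> carrier G \<and> card A \<ge> l \<longrightarrow> (\<exists>S\<subseteq>A. k_barycentric G k S))"

end

theory Submission imports Defs begin

(* Z/pZ is the additive group of residue_ring p, whose carrier is {0..p-1}; a k-element set S
   of residues is k-barycentric iff  sum S = k*g (mod p)  for some g in S.  Then: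

   * Upper bound: every (k+1)-set B contains a k-barycentric subset.  With s = sum B, the
     map f(c) = s - k*c (mod p) is injective, so |f(B) \<inter> B| >= 2(k+1) - p >= 2, while f has
     at most one fixed point.  Hence some c in B has b = f(c) in B with b \<noteq> c, and B - {b}
     has sum s - b = k*c (mod p) with c in B - {b}.
   * Lower bound: there is an m-set C (m = p - k, 3 <= m <= p/2) containing its own mean t,
     i.e. sum C = m*t.  Its complement A (a k-set) is not barycentric: since p divides
     0 + 1 + ... + (p-1), sum A = -m*t, and -m*t = k*g = -m*g (mod p) forces g = t \<notin> A. *)

lemma barycentric_olson_eqI:
  assumes large: "\<And>A. A \<subseteq> carrier G \<Longrightarrow> l + 1 \<le> card A \<Longrightarrow> \<exists>S\<subseteq>A. k_barycentric G k S"
    and witness: "A\<^sub>0 \<subseteq> carrier G" "card A\<^sub>0 = l" "\<not> (\<exists>S\<subseteq>A\<^sub>0. k_barycentric G k S)"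
  shows "barycentric_olson k G = l + 1"
  unfolding barycentric_olson_def
proof (rule Least_equality)
  show "\<forall>A. A \<subseteq> carrier G \<and> l + 1 \<le> card A \<longrightarrow> (\<exists>S\<subseteq>A. k_barycentric G k S)"
    using large by blast
next
  fix l' assume "\<forall>A. A \<subseteq> carrier G \<and> l' \<le> card A \<longrightarrow> (\<exists>S\<subseteq>A. k_barycentric G k S)"
  then have "\<not> l' \<le> card A\<^sub>0"
    using witness by blast
  then show "l + 1 \<le> l'"
    using witness(2) by simp
qed

lemma residue_add_finprod:
  fixes m :: int
  assumes "m > 1" "finite S" "S \<subseteq> {0..m - 1}"
  shows "finprod (add_monoid (residue_ring m)) (\<lambda>x. x) S = (\<Sum>S) mod m"
proof -
  interpret residues m "residue_ring m"
    by unfold_locales (use assms in simp_all)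
  have "finprod (add_monoid (residue_ring m)) (\<lambda>x. x) S = finsum (residue_ring m) (\<lambda>x. x mod m) S"
    unfolding finsum_def[symmetric]
    by (rule finsum_cong') (use assms in \<open>auto simp: res_carrier_eq Pi_def\<close>)
  also have "\<dots> = (\<Sum>S) mod m"
    using sum_cong[OF assms(2), of "\<lambda>x. x"] by simp
  finally show ?thesis .
qed

lemma residue_add_pow:
  fixes m g :: int
  shows "g [^]\<^bsub>add_monoid (residue_ring m)\<^esub> n = (int n * g) mod m"
proof (induction n)
  case 0
  then show ?case by (simp add: residue_ring_def)
next
  case (Suc n)
  have "g [^]\<^bsub>add_monoid (residue_ring m)\<^esub> Suc n
      = g [^]\<^bsub>add_monoid (residue_ring m)\<^esub> n \<otimes>\<^bsub>add_monoid (residue_ring m)\<^esub> g"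
    by (rule nat_pow_Suc)
  also have "\<dots> = ((int n * g) mod m + g) mod m"
    using Suc by (simp add: residue_ring_def)
  also have "\<dots> = (int (Suc n) * g) mod m"
    by (simp add: algebra_simps mod_add_right_eq)
  finally show ?case .
qed

lemma k_barycentric_residue_iff:
  fixes m :: int
  assumes "m > 1"
  shows "k_barycentric (add_monoid (residue_ring m)) k S \<longleftrightarrow>
           S \<subseteq> {0..m - 1} \<and> card S = k \<and> (\<exists>g\<in>S. [\<Sum>S = int k * g] (mod m))"
proof (cases "S \<subseteq> {0..m - 1}")
  case True
  then have "finite S" using finite_subset by blast
  with True have "finprod (add_monoid (residue_ring m)) (\<lambda>x. x) S = (\<Sum>S) mod m"
    using residue_add_finprod[OF assms] by blast
  with True \<open>finite S\<close> show ?thesis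
    unfolding k_barycentric_def residue_add_pow cong_def by (simp add: residue_ring_def)
next
  case False
  then show ?thesis by (simp add: k_barycentric_def residue_ring_def)
qed

lemma prime_residue_cancel:
  fixes p :: nat and a x y :: int
  assumes "Factorial_Ring.prime p" "\<not> int p dvd a" "[a * x = a * y] (mod int p)"
    and "x \<in> {0..int p - 1}" "y \<in> {0..int p - 1}"
  shows "x = y"
proof -
  have "coprime a (int p)"
    using prime_imp_coprime[of "int p" a] assms(1,2) by (simp add: coprime_commute)
  then have "[x = y] (mod int p)"
    using assms(3) cong_mult_lcancel by blast
  then show ?thesis
    using assms(4,5) cong_less_imp_eq_int by auto
qed

lemma not_dvd_if_between:
  fixes p :: nat and a :: int
  assumes "0 < a" "a < int p"
  shows "\<not> int p dvd a"
  using assms zdvd_not_zless by blast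

section \<open>Upper bound: large sets contain barycentric subsets\<close>

lemma two_points_mapped_into:
  assumes "finite U" "inj_on f U" "B \<subseteq> U" "f ` B \<subseteq> U" "card U + 2 \<le> 2 * card B"
  shows "2 \<le> card {c\<in>B. f c \<in> B}"
proof -
  have finB: "finite B" using assms(1,3) finite_subset by blast
  have injB: "inj_on f B" using assms(2,3) inj_on_subset by blast
  have "card (f ` B \<union> B) \<le> card U"
    using assms(1,3,4) by (intro card_mono) auto
  moreover have "card (f ` B) + card B = card (f ` B \<union> B) + card (f ` B \<inter> B)"
    using finB by (intro card_Un_Int) auto
  moreover have "card (f ` B) = card B"
    using injB by (rule card_image)
  ultimately have "2 \<le> card (f ` B \<inter> B)"
    using assms(5) by linarith
  also have "f ` B \<inter> B = f ` {c\<in>B. f c \<in> B}"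
    by auto
  also have "card \<dots> = card {c\<in>B. f c \<in> B}"
    using injB by (intro card_image) (auto intro: inj_on_subset)
  finally show ?thesis .
qed

text \<open>The element b is f(c) for the affine map
  f(c) = sum B - k*c, which is injective and has at most one fixed point.\<close>

lemma large_set_has_barycentric_subset:
  fixes p k :: nat and B :: "int set"
  assumes p: "Factorial_Ring.prime p" and pk: "p \<le> 2 * k" "k + 1 < p"
    and B: "B \<subseteq> {0..int p - 1}" "card B = k + 1"
  shows "\<exists>b\<in>B. \<exists>c\<in>B - {b}. [\<Sum>(B - {b}) = int k * c] (mod int p)"
proof -
  define U where "U = {0..int p - 1}"
  define f where "f c = (\<Sum>B - int k * c) mod int p" for c
  have f_cong: "[f c = \<Sum>B - int k * c] (mod int p)" for c
    by (simp add: f_def cong_def)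
  have fU: "f ` B \<subseteq> U"
    using pk by (auto simp: f_def U_def)
  have inj: "inj_on f U"
  proof (rule inj_onI)
    fix c c' assume "c \<in> U" "c' \<in> U" "f c = f c'"
    moreover have "[\<Sum>B - int k * c = \<Sum>B - int k * c'] (mod int p)"
      using f_cong[of c] f_cong[of c'] \<open>f c = f c'\<close> by (metis cong_sym cong_trans)
    then have "[int k * c = int k * c'] (mod int p)"
      by (simp add: cong_iff_dvd_diff dvd_diff_commute)
    ultimately show "c = c'"
      using prime_residue_cancel[OF p not_dvd_if_between, of "int k" c c'] pk by (auto simp: U_def)
  qed
  have fixed_unique: "c = c'"
    if "c \<in> U" "c' \<in> U" "f c = c" "f c' = c'" for c c'
  proof -
    have "[int (k + 1) * x = \<Sum>B] (mod int p)" if "f x = x" for x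
      using f_cong[of x] that by (simp add: cong_iff_dvd_diff algebra_simps dvd_diff_commute)
    then have "[int (k + 1) * c = int (k + 1) * c'] (mod int p)"
      using that(3,4) cong_sym cong_trans by blast
    then show "c = c'"
      using prime_residue_cancel[OF p not_dvd_if_between, of "int (k + 1)" c c'] that(1,2) pk
      by (auto simp: U_def)
  qed
  have "2 \<le> card {c\<in>B. f c \<in> B}"
    using two_points_mapped_into[OF _ inj _ fU] B pk by (simp add: U_def)
  then obtain c1 c2 where "c1 \<in> B" "f c1 \<in> B" "c2 \<in> B" "f c2 \<in> B" "c1 \<noteq> c2"
    by (auto simp: numeral_2_eq_2 card_le_Suc_iff)
  moreover have "c1 \<in> U" "c2 \<in> U"
    using B(1) \<open>c1 \<in> B\<close> \<open>c2 \<in> B\<close> by (auto simp: U_def)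
  ultimately obtain c where c: "c \<in> B" "f c \<in> B" "f c \<noteq> c"
    using fixed_unique by blast
  have "\<Sum>(B - {f c}) = \<Sum>B - f c"
    using c B by (simp add: sum_diff1 finite_subset)
  moreover have "[\<Sum>B - f c = \<Sum>B - (\<Sum>B - int k * c)] (mod int p)"
    using f_cong[of c] by (intro cong_diff cong_refl)
  ultimately have "[\<Sum>(B - {f c}) = int k * c] (mod int p)"
    by simp
  moreover have "c \<in> B - {f c}"
    using c by auto
  ultimately show ?thesis
    using c(2) by blast
qed

section \<open>Lower bound: a large set without barycentric subsets\<close>

text \<open>For odd p the sum 0 + 1 + ... + (p-1) = p(p-1)/2 vanishes modulo p.\<close>

lemma sum_residues_dvd:
  fixes p :: nat
  assumes "odd p"
  shows "int p dvd \<Sum>{0..int p - 1}"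
proof -
  obtain q where q: "p = 2 * q + 1"
    using assms oddE by blast
  have "\<Sum>{0..int p - 1} = ((int p - 1) * int p - 0 * (0 - 1)) div 2"
    using Sum_Icc_int[of 0 "int p - 1"] q by simp
  also have "\<dots> = int q * int p"
    using q by (simp add: algebra_simps)
  finally show ?thesis
    by simp
qed

text \<open>For 3 \<le> m and 2m \<le> p there is an m-set of residues containing its own mean t:
  {1, ..., m} with t = (m+1)/2 for odd m, and {1, ..., m-1} \<union> {3m/2} with t = m/2 + 1 for
  even m.\<close>

lemma set_containing_its_mean:
  fixes p m :: nat
  assumes "3 \<le> m" "2 * m \<le> p"
  shows "\<exists>C t. C \<subseteq> {0..int p - 1} \<and> card C = m \<and> t \<in> C \<and> \<Sum>C = int m * t"
proof (cases "even m")
  case True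
  then obtain r where r: "m = 2 * r"
    by blast
  define C where "C = {1..2 * int r - 1} \<union> {3 * int r}"
  have "\<Sum>{1..2 * int r - 1} = ((2 * int r - 1) * (2 * int r) - 1 * 0) div 2"
    using Sum_Icc_int[of 1 "2 * int r - 1"] r assms by simp
  then have "\<Sum>C = int m * (int r + 1)"
    using r assms by (simp add: C_def algebra_simps)
  moreover have "C \<subseteq> {0..int p - 1}" "card C = m" "int r + 1 \<in> C"
    using r assms by (auto simp: C_def)
  ultimately show ?thesis
    by blast
next
  case False
  then obtain r where r: "m = 2 * r + 1"
    using oddE by blast
  define C where "C = {1..2 * int r + 1}"
  have "\<Sum>C = ((2 * int r + 1) * (2 * int r + 2) - 1 * 0) div 2"
    using Sum_Icc_int[of 1 "2 * int r + 1"] by (simp add: C_def algebra_simps)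
  then have "\<Sum>C = int m * (int r + 1)"
    using r by (simp add: algebra_simps)
  moreover have "C \<subseteq> {0..int p - 1}" "card C = m" "int r + 1 \<in> C"
    using r assms by (auto simp: C_def)
  ultimately show ?thesis
    by blast
qed

text \<open>If C contains its mean t (sum C = m*t, 0 < m < p), then the complement of C is not
  (p-m)-barycentric: its sum is -m*t modulo p, and -m*t = (p-m)*g = -m*g forces g = t \<in> C.\<close>

lemma complement_of_mean_set:
  fixes p m :: nat and C :: "int set" and t g :: int
  assumes p: "Factorial_Ring.prime p" "odd p" and m: "0 < m" "m < p"
    and C: "C \<subseteq> {0..int p - 1}" "t \<in> C" "\<Sum>C = int m * t"
    and g: "g \<in> {0..int p - 1} - C"
  shows "\<not> [\<Sum>({0..int p - 1} - C) = int (p - m) * g] (mod int p)"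
proof
  assume "[\<Sum>({0..int p - 1} - C) = int (p - m) * g] (mod int p)"
  moreover have "\<Sum>({0..int p - 1} - C) = \<Sum>{0..int p - 1} - int m * t"
    using C by (simp add: sum_diff)
  ultimately have "int p dvd (\<Sum>{0..int p - 1} - int m * t) - (int p - int m) * g"
    using m by (simp add: cong_iff_dvd_diff of_nat_diff)
  moreover have "int p dvd \<Sum>{0..int p - 1} - int p * g"
    using sum_residues_dvd[OF p(2)] by simp
  ultimately have "int p dvd (\<Sum>{0..int p - 1} - int p * g)
                     - ((\<Sum>{0..int p - 1} - int m * t) - (int p - int m) * g)"
    by (rule dvd_diff[rotated])
  then have "[int m * t = int m * g] (mod int p)"
    by (simp add: cong_iff_dvd_diff algebra_simps)
  then have "t = g"
    using prime_residue_cancel[OF p(1) not_dvd_if_between, of "int m" t g] m C g by auto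
  then show False
    using g C by auto
qed

lemma barycentric_free_set:
  fixes p k :: nat
  assumes p: "Factorial_Ring.prime p" and k: "3 \<le> p - k" "2 * (p - k) \<le> p"
  shows "\<exists>A\<subseteq>{0..int p - 1}. card A = k \<and> \<not> (\<exists>g\<in>A. [\<Sum>A = int k * g] (mod int p))"
proof -
  obtain C t where C: "C \<subseteq> {0..int p - 1}" "card C = p - k" "t \<in> C" "\<Sum>C = int (p - k) * t"
    using set_containing_its_mean[OF k] by blast
  define A where "A = {0..int p - 1} - C"
  have "card A = k"
    using C(1,2) k finite_subset[OF C(1)] by (simp add: A_def card_Diff_subset)
  moreover have "odd p"
    using p k prime_odd_nat[OF p] by linarith
  then have "\<not> [\<Sum>A = int (p - (p - k)) * g] (mod int p)" if "g \<in> A" for g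
    unfolding A_def
    by (rule complement_of_mean_set[OF p _ _ _ C(1,3,4)]) (use k that in \<open>auto simp: A_def\<close>)
  then have "\<not> (\<exists>g\<in>A. [\<Sum>A = int k * g] (mod int p))"
    using k by auto
  ultimately show ?thesis
    unfolding A_def by blast
qed

lemma residue_large_sets_barycentric:
  fixes p k :: nat
  assumes p: "Factorial_Ring.prime p" and pk: "p \<le> 2 * k" "k + 1 < p"
    and A: "A \<subseteq> carrier (add_monoid (residue_ring (int p)))" "k + 1 \<le> card A"
  shows "\<exists>S\<subseteq>A. k_barycentric (add_monoid (residue_ring (int p))) k S"
proof -
  obtain B where B: "B \<subseteq> A" "card B = k + 1"
    using obtain_subset_with_card_n[OF A(2)] by blast
  have BU: "B \<subseteq> {0..int p - 1}"
    using A(1) B(1) by (auto simp: residue_ring_def)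
  obtain b c where "b \<in> B" "c \<in> B - {b}" "[\<Sum>(B - {b}) = int k * c] (mod int p)"
    using large_set_has_barycentric_subset[OF p pk BU B(2)] by blast
  moreover have "card (B - {b}) = k"
    using \<open>b \<in> B\<close> B(2) by simp
  ultimately have "k_barycentric (add_monoid (residue_ring (int p))) k (B - {b})"
    using k_barycentric_residue_iff[of "int p"] BU pk by auto
  then show ?thesis
    using B(1) by blast
qed

lemma residue_barycentric_free_set:
  fixes p k :: nat
  assumes p: "Factorial_Ring.prime p" and k: "3 \<le> p - k" "2 * (p - k) \<le> p"
  obtains A where "A \<subseteq> carrier (add_monoid (residue_ring (int p)))" "card A = k"
    "\<not> (\<exists>S\<subseteq>A. k_barycentric (add_monoid (residue_ring (int p))) k S)"
proof -
  obtain A where A: "A \<subseteq> {0..int p - 1}" "card A = k"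
    and free: "\<not> (\<exists>g\<in>A. [\<Sum>A = int k * g] (mod int p))"
    using barycentric_free_set[OF p k] by blast
  have "S = A" if "S \<subseteq> A" "card S = k" for S
    using card_subset_eq[OF finite_subset[OF A(1)] that(1)] A(2) that(2) by simp
  then have "\<not> (\<exists>S\<subseteq>A. k_barycentric (add_monoid (residue_ring (int p))) k S)"
    using free k_barycentric_residue_iff[of "int p"] prime_gt_1_nat[OF p] by auto
  moreover have "A \<subseteq> carrier (add_monoid (residue_ring (int p)))"
    using A(1) by (simp add: residue_ring_def)
  ultimately show ?thesis
    using that A(2) by blast
qed

theorem mainTheorem6:
  fixes p k :: nat
  assumes "Factorial_Ring.prime p" and "p \<ge> 7"
    and "(p + 1) div 2 \<le> k" and "k \<le> p - 3"
  shows "barycentric_olson k (add_monoid (residue_ring (int p))) = k + 1"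
proof -
  have large: "p \<le> 2 * k" "k + 1 < p"
    using assms(2-4) by linarith+
  have small_complement: "3 \<le> p - k" "2 * (p - k) \<le> p"
    using assms(2-4) by linarith+
  obtain A where "A \<subseteq> carrier (add_monoid (residue_ring (int p)))" "card A = k"
    "\<not> (\<exists>S\<subseteq>A. k_barycentric (add_monoid (residue_ring (int p))) k S)"
    using residue_barycentric_free_set[OF assms(1) small_complement] by blast
  then show ?thesis
    using barycentric_olson_eqI residue_large_sets_barycentric[OF assms(1) large] by blast
qed

end
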